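(* For every $n \ge 1$, $$ B^+_n(x) = 2(n-1)x\, B^+_{n-1}(x) + 2x(1-x) \frac{d B^+_{n-1}}{dx}(x) + B_{n-1}(x). $$ Moreover, as formal power series in $t$, $$ \sum_{n \ge 0} B^+_n(x) \frac{t^n}{n!} = \frac{e^t (e^{xt} - x e^t)}{e^{2xt} - x e^{2t}} \quad\text{and}\quad \sum_{n \ge 0} B^-_n(x) \frac{t^n}{n!} = \frac{x e^t (e^t - e^{xt})}{e^{2xt} - x e^{2t}}. $$
   Context: A signed permutation of $[n]$ is a set $S = \{a_1, \dots, a_n\}$ with $a_i \in \{i, -i\}$, together with a bijection $w : S \to S$. $B_n$ is the set of all of them. - An index $i \in \{0, \dots, n-1\}$ is a $B$-descent if $w(a_i) > w(a_{i+1})$, with $w(a_0) = 0$; $\mathrm{des}_B(w)$ is the number of $B$-descents. - $B_n(x) = \sum_{w \in B_n} x^{\mathrm{des}_B(w)}$, with $B_0(x) = 1$. - $B^+_n(x)$ (resp. $B^-_n(x)$) is the same sum restricted to $w$ with $w(a_n) > 0$ (resp. $< 0$), with $B^+_0(x) = 1$ and $B^-_0(x) = 0$. *)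

theory Defs
  imports "HOL-Computational_Algebra.Computational_Algebra"
begin

text \<open>A signed permutation of [n] is a pair (a, w): a i \<in> {i, -i} for 1 \<le> i \<le> n
  (a i = 0 otherwise), i.e. S = a ` {1..n}; and w is a bijection S \<rightarrow> S
  (extended by 0 outside S so that the set of them is finite).\<close>
definition signed_perms :: "nat \<Rightarrow> ((nat \<Rightarrow> int) \<times> (int \<Rightarrow> int)) set" where
  "signed_perms n = {(a, w).
      (\<forall>i\<in>{1..n}. a i = int i \<or> a i = - int i) \<and> (\<forall>i. i \<notin> {1..n} \<longrightarrow> a i = 0) \<and>
      bij_betw w (a ` {1..n}) (a ` {1..n}) \<and> (\<forall>x. x \<notin> a ` {1..n} \<longrightarrow> w x = 0)}"

definition wval :: "(nat \<Rightarrow> int) \<times> (int \<Rightarrow> int) \<Rightarrow> nat \<Rightarrow> int" where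
  "wval p i = (if i = 0 then 0 else snd p (fst p i))"

definition desB :: "nat \<Rightarrow> (nat \<Rightarrow> int) \<times> (int \<Rightarrow> int) \<Rightarrow> nat" where
  "desB n p = card {i \<in> {0..<n}. wval p i > wval p (Suc i)}"

definition Bpoly :: "nat \<Rightarrow> int poly" where
  "Bpoly n = (\<Sum>p\<in>signed_perms n. monom 1 (desB n p))"

definition Bplus :: "nat \<Rightarrow> int poly" where
  "Bplus n = (if n = 0 then 1 else (\<Sum>p\<in>{p\<in>signed_perms n. wval p n > 0}. monom 1 (desB n p)))"

definition Bminus :: "nat \<Rightarrow> int poly" where
  "Bminus n = (if n = 0 then 0 else (\<Sum>p\<in>{p\<in>signed_perms n. wval p n < 0}. monom 1 (desB n p)))"

definition xF :: "int poly fract" where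
  "xF = to_fract [:0, 1:]"

definition egf :: "(nat \<Rightarrow> int poly) \<Rightarrow> int poly fract fps" where
  "egf P = Abs_fps (\<lambda>n. to_fract (P n) / fact n)"

end

theory Submission
  imports Defs
begin

text \<open>A signed permutation is recorded by its word \<open>w(a_1) ... w(a_n)\<close>, a list of integers
  whose absolute values are \<open>1, ..., n\<close>, each once; its B-descents are the descents of the
  list \<open>0 w(a_1) ... w(a_n)\<close>.  Every word of length \<open>m + 1\<close> arises exactly once by inserting
  \<open>+(m + 1)\<close> or \<open>-(m + 1)\<close> into a word \<open>u\<close> of length \<open>m\<close>.  Being larger in absolute value than
  its neighbours, the new letter adds a descent exactly when it goes into an ascent of \<open>0 u\<close>, or
  at the end with a minus sign, and the last letter changes only when it goes at the end.
  Summing over the \<open>2(m + 1)\<close> insertions gives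
  \<open>B\<^sup>\<plusminus>_(m+1) = 2mx B\<^sup>\<plusminus>_m + 2x(1 - x) (B\<^sup>\<plusminus>_m)' + c\<^sup>\<plusminus> B_m\<close> with \<open>c\<^sup>+ = 1\<close>, \<open>c\<^sup>- = x\<close>.

  This recursion is solved by \<open>B\<^sup>+_n = (1 - x)\<^sup>n \<Sum>_j ((2j + 1)\<^sup>n - (2j)\<^sup>n) x\<^sup>j\<close> and
  \<open>B\<^sup>-_n = (1 - x)\<^sup>n \<Sum>_(j \<ge> 1) ((2j)\<^sup>n - (2j - 1)\<^sup>n) x\<^sup>j\<close>.  By the binomial theorem these closed
  forms make \<open>B\<^sup>\<plusminus>_n - x \<Sum>_k (n choose k) (2 - 2x)\<^sup>(n-k) B\<^sup>\<plusminus>_k\<close> an explicit polynomial,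
  which says that \<open>egf B\<^sup>\<plusminus> \<cdot> (1 - x exp(2(1 - x)t))\<close> is a combination of \<open>exp((1 - x)t)\<close> and
  \<open>exp(2(1 - x)t)\<close>; multiplying by \<open>exp(2xt)\<close> gives the claimed quotients.\<close>

section \<open>Signed permutations as signed words\<close>

definition signed_words :: "nat \<Rightarrow> int list set" where
  "signed_words n = {u. length u = n \<and> distinct (map abs u) \<and> set (map abs u) = int ` {1..n}}"

definition signed_perm_word :: "nat \<Rightarrow> (nat \<Rightarrow> int) \<times> (int \<Rightarrow> int) \<Rightarrow> int list" where
  "signed_perm_word n p = map (\<lambda>i. snd p (fst p i)) [1..<Suc n]"

lemma length_signed_perm_word [simp]: "length (signed_perm_word n p) = n"
  by (simp add: signed_perm_word_def)

lemma nth_signed_perm_word: "i < n \<Longrightarrow> signed_perm_word n p ! i = snd p (fst p (Suc i))"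
  by (simp add: signed_perm_word_def del: upt_Suc)

lemma abs_le_if_in_signed_words:
  "u \<in> signed_words n \<Longrightarrow> x \<in> set u \<Longrightarrow> 1 \<le> \<bar>x\<bar> \<and> \<bar>x\<bar> \<le> int n"
  by (force simp: signed_words_def)

lemma finite_signed_words: "finite (signed_words n)"
proof -
  have "signed_words n \<subseteq> {u. set u \<subseteq> {-int n..int n} \<and> length u = n}"
    using abs_le_if_in_signed_words by (fastforce simp: signed_words_def)
  then show ?thesis using finite_lists_length_eq[of "{-int n..int n}" n] finite_subset by blast
qed

lemma signed_perm_word_in_signed_words:
  assumes "p \<in> signed_perms n" shows "signed_perm_word n p \<in> signed_words n"
proof -
  obtain a w where p: "p = (a, w)" by (cases p)
  have a: "\<forall>i\<in>{1..n}. a i = int i \<or> a i = - int i"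
    and bij: "bij_betw w (a ` {1..n}) (a ` {1..n})"
    using assms p by (auto simp: signed_perms_def)
  have abs_a: "\<bar>a i\<bar> = int i" if "i \<in> {1..n}" for i using a that by fastforce
  have w_a: "w (a i) \<in> a ` {1..n}" if "i \<in> {1..n}" for i using bij that bij_betwE by blast
  have map_abs: "map abs (signed_perm_word n p) = map (\<lambda>i. \<bar>w (a i)\<bar>) [1..<Suc n]"
    by (simp add: signed_perm_word_def p)
  have inj: "inj_on (\<lambda>i. \<bar>w (a i)\<bar>) {1..n}"
  proof (rule inj_onI)
    fix i j assume i: "i \<in> {1..n}" and j: "j \<in> {1..n}" and eq: "\<bar>w (a i)\<bar> = \<bar>w (a j)\<bar>"
    obtain k where k: "k \<in> {1..n}" "w (a i) = a k" using w_a[OF i] by auto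
    obtain l where l: "l \<in> {1..n}" "w (a j) = a l" using w_a[OF j] by auto
    have "w (a i) = w (a j)" using eq k l abs_a by auto
    then have "a i = a j" using bij i j by (auto simp: bij_betw_def dest: inj_onD)
    then show "i = j" using abs_a i j by (metis of_nat_eq_iff)
  qed
  have distinct: "distinct (map abs (signed_perm_word n p))"
    unfolding map_abs distinct_map using inj
    by (simp only: set_upt atLeastLessThanSuc_atLeastAtMost distinct_upt)
  have "set (map abs (signed_perm_word n p)) = (\<lambda>i. \<bar>w (a i)\<bar>) ` {1..n}"
    unfolding map_abs by (simp only: set_map set_upt atLeastLessThanSuc_atLeastAtMost)
  also have "\<dots> = int ` {1..n}"
  proof -
    have "\<bar>w (a i)\<bar> \<in> int ` {1..n}" if i: "i \<in> {1..n}" for i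
    proof -
      obtain k where "k \<in> {1..n}" "w (a i) = a k" using w_a[OF i] by blast
      then show ?thesis by (simp add: abs_a)
    qed
    then have "(\<lambda>i. \<bar>w (a i)\<bar>) ` {1..n} \<subseteq> int ` {1..n}" by blast
    moreover have "card ((\<lambda>i. \<bar>w (a i)\<bar>) ` {1..n}) = card (int ` {1..n})"
      using inj by (simp add: card_image)
    ultimately show ?thesis by (intro card_subset_eq) simp_all
  qed
  finally show ?thesis using distinct by (simp add: signed_words_def)
qed

lemma set_signed_perm_word:
  assumes "(a, w) \<in> signed_perms n" shows "set (signed_perm_word n (a, w)) = a ` {1..n}"
proof -
  have "bij_betw w (a ` {1..n}) (a ` {1..n})" using assms by (auto simp: signed_perms_def)
  moreover have "set (signed_perm_word n (a, w)) = w ` a ` {1..n}"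
    by (auto simp: signed_perm_word_def)
  ultimately show ?thesis by (simp add: bij_betw_def)
qed

lemma inj_on_signed_perm_word: "inj_on (signed_perm_word n) (signed_perms n)"
proof (rule inj_onI)
  fix p q assume p: "p \<in> signed_perms n" and q: "q \<in> signed_perms n"
    and eq: "signed_perm_word n p = signed_perm_word n q"
  obtain a w b v where pq: "p = (a, w)" "q = (b, v)" by (cases p, cases q)
  have a: "\<forall>i\<in>{1..n}. a i = int i \<or> a i = - int i" "\<forall>i. i \<notin> {1..n} \<longrightarrow> a i = 0"
    "\<forall>x. x \<notin> a ` {1..n} \<longrightarrow> w x = 0"
    using p pq by (auto simp: signed_perms_def)
  have b: "\<forall>i\<in>{1..n}. b i = int i \<or> b i = - int i" "\<forall>i. i \<notin> {1..n} \<longrightarrow> b i = 0"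
    "\<forall>x. x \<notin> b ` {1..n} \<longrightarrow> v x = 0"
    using q pq by (auto simp: signed_perms_def)
  have same_set: "a ` {1..n} = b ` {1..n}"
    using set_signed_perm_word[of a w n] set_signed_perm_word[of b v n] p q pq eq by simp
  have "a = b"
  proof
    fix i show "a i = b i"
    proof (cases "i \<in> {1..n}")
      case True
      then obtain k where k: "k \<in> {1..n}" "a i = b k" using same_set by blast
      have "\<bar>a i\<bar> = int i" using a True by fastforce
      moreover have "\<bar>b k\<bar> = int k" using b k by fastforce
      ultimately show ?thesis using k by simp
    qed (use a b in simp)
  qed
  moreover have "w = v"
  proof
    fix x show "w x = v x"
    proof (cases "x \<in> a ` {1..n}")
      case True
      then obtain i where i: "i \<in> {1..n}" "x = a i" by blast
      have "signed_perm_word n p ! (i - 1) = signed_perm_word n q ! (i - 1)" using eq by simp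
      moreover have "i - 1 < n" "Suc (i - 1) = i" using i by auto
      ultimately show ?thesis using i \<open>a = b\<close> pq by (simp add: nth_signed_perm_word)
    qed (use a b \<open>a = b\<close> in simp)
  qed
  ultimately show "p = q" using pq by simp
qed

lemma eq_if_abs_eq_in_signed_words:
  assumes "u \<in> signed_words n" "x \<in> set u" "y \<in> set u" "\<bar>x\<bar> = \<bar>y\<bar>" shows "x = y"
proof -
  have "distinct (map abs u)" using assms(1) by (simp add: signed_words_def)
  then show ?thesis using assms(2-4) by (auto simp: distinct_map dest: inj_onD)
qed

definition signs_of_word :: "nat \<Rightarrow> int list \<Rightarrow> nat \<Rightarrow> int" where
  "signs_of_word n u i = (if i \<in> {1..n} then (THE x. x \<in> set u \<and> \<bar>x\<bar> = int i) else 0)"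

definition perm_of_word :: "int list \<Rightarrow> int \<Rightarrow> int" where
  "perm_of_word u x = (if x \<in> set u then u ! (nat \<bar>x\<bar> - 1) else 0)"

lemma signs_of_word:
  assumes u: "u \<in> signed_words n" and i: "i \<in> {1..n}"
  shows "signs_of_word n u i \<in> set u \<and> \<bar>signs_of_word n u i\<bar> = int i"
proof -
  have "int i \<in> set (map abs u)" using u i by (auto simp: signed_words_def)
  then obtain x where x: "x \<in> set u" "\<bar>x\<bar> = int i" by auto
  have "\<exists>!x. x \<in> set u \<and> \<bar>x\<bar> = int i"
    by (rule ex1I[of _ x]) (use x eq_if_abs_eq_in_signed_words[OF u] in auto)
  then have "(THE x. x \<in> set u \<and> \<bar>x\<bar> = int i) \<in> set u
      \<and> \<bar>THE x. x \<in> set u \<and> \<bar>x\<bar> = int i\<bar> = int i"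
    by (rule theI')
  then show ?thesis using i by (simp add: signs_of_word_def)
qed

lemma image_signs_of_word:
  assumes u: "u \<in> signed_words n" shows "signs_of_word n u ` {1..n} = set u"
proof
  show "set u \<subseteq> signs_of_word n u ` {1..n}"
  proof
    fix x assume x: "x \<in> set u"
    then have "\<bar>x\<bar> \<in> int ` {1..n}" using u by (auto simp: signed_words_def)
    then obtain i where i: "i \<in> {1..n}" "\<bar>x\<bar> = int i" by blast
    then have "signs_of_word n u i = x"
      using signs_of_word[OF u i(1)] x eq_if_abs_eq_in_signed_words[OF u] by auto
    then show "x \<in> signs_of_word n u ` {1..n}" using i by auto
  qed
qed (use signs_of_word[OF u] in auto)

lemma bij_betw_perm_of_word:
  assumes u: "u \<in> signed_words n" shows "bij_betw (perm_of_word u) (set u) (set u)"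
proof -
  have len: "length u = n" using u by (simp add: signed_words_def)
  have index_lt: "nat \<bar>x\<bar> - 1 < n" if "x \<in> set u" for x
    using abs_le_if_in_signed_words[OF u that] by auto
  have inj: "inj_on (perm_of_word u) (set u)"
  proof (rule inj_onI)
    fix x y assume x: "x \<in> set u" and y: "y \<in> set u" and "perm_of_word u x = perm_of_word u y"
    with x y have "u ! (nat \<bar>x\<bar> - 1) = u ! (nat \<bar>y\<bar> - 1)" by (simp add: perm_of_word_def)
    moreover have "distinct u" using u by (simp add: signed_words_def distinct_map)
    ultimately have "nat \<bar>x\<bar> - 1 = nat \<bar>y\<bar> - 1"
      using index_lt[OF x] index_lt[OF y] len by (simp add: nth_eq_iff_index_eq)
    then have "\<bar>x\<bar> = \<bar>y\<bar>"
      using abs_le_if_in_signed_words[OF u x] abs_le_if_in_signed_words[OF u y] by linarith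
    then show "x = y" by (rule eq_if_abs_eq_in_signed_words[OF u x y])
  qed
  have "perm_of_word u ` set u \<subseteq> set u" using index_lt len by (auto simp: perm_of_word_def)
  then show ?thesis using endo_inj_surj[OF _ _ inj] inj by (simp add: bij_betw_def)
qed

lemma signed_perm_word_surj:
  assumes u: "u \<in> signed_words n" shows "\<exists>p\<in>signed_perms n. signed_perm_word n p = u"
proof (intro bexI)
  let ?a = "signs_of_word n u" and ?w = "perm_of_word u"
  have "\<forall>i\<in>{1..n}. ?a i = int i \<or> ?a i = - int i"
  proof
    fix i assume "i \<in> {1..n}"
    then have "\<bar>?a i\<bar> = int i" using signs_of_word[OF u] by blast
    then show "?a i = int i \<or> ?a i = - int i" by linarith
  qed
  then show "(?a, ?w) \<in> signed_perms n"
    using image_signs_of_word[OF u] bij_betw_perm_of_word[OF u]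
    by (simp add: signed_perms_def signs_of_word_def perm_of_word_def)
  show "signed_perm_word n (?a, ?w) = u"
  proof (rule nth_equalityI)
    fix i assume "i < length (signed_perm_word n (?a, ?w))"
    then have i: "i < n" by simp
    then have "?a (Suc i) \<in> set u" "nat \<bar>?a (Suc i)\<bar> = Suc i" using signs_of_word[OF u] by auto
    then show "signed_perm_word n (?a, ?w) ! i = u ! i"
      using i by (simp add: nth_signed_perm_word perm_of_word_def)
  qed (use u in \<open>simp add: signed_words_def\<close>)
qed

lemma bij_betw_signed_perm_word:
  "bij_betw (signed_perm_word n) (signed_perms n) (signed_words n)"
  unfolding bij_betw_def
  using inj_on_signed_perm_word signed_perm_word_in_signed_words signed_perm_word_surj by blast

lemma signed_words_0 [simp]: "signed_words 0 = {[]}"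
  by (auto simp: signed_words_def)

lemma finite_signed_perms: "finite (signed_perms n)"
  using bij_betw_finite[OF bij_betw_signed_perm_word] finite_signed_words by blast

lemma sum_signed_perms_eq_sum_signed_words:
  "(\<Sum>p\<in>signed_perms n. f (signed_perm_word n p)) = (\<Sum>u\<in>signed_words n. f u)"
  by (rule sum.reindex_bij_betw[OF bij_betw_signed_perm_word])

fun descents :: "'a::linorder list \<Rightarrow> nat" where
  "descents (x # y # ys) = (if y < x then 1 else 0) + descents (y # ys)"
| "descents _ = 0"

lemma descents_eq_card: "descents xs = card {i. Suc i < length xs \<and> xs ! Suc i < xs ! i}"
proof (induction xs rule: descents.induct)
  case (1 x y ys)
  let ?D = "{i. Suc i < length (y # ys) \<and> (y # ys) ! Suc i < (y # ys) ! i}"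
  have "{i. Suc i < length (x # y # ys) \<and> (x # y # ys) ! Suc i < (x # y # ys) ! i}
      = (if y < x then {0} else {}) \<union> Suc ` ?D" (is "?L = ?R")
  proof
    show "?L \<subseteq> ?R"
    proof
      fix i assume "i \<in> ?L" then show "i \<in> ?R" by (cases i) auto
    qed
  qed auto
  moreover have "card ((if y < x then {0} else {}) \<union> Suc ` ?D) = (if y < x then 1 else 0) + card ?D"
    by (simp add: card_image)
  ultimately show ?case using "1.IH" by simp
qed simp_all

lemma descents_append:
  "xs \<noteq> [] \<Longrightarrow> descents (xs @ y # ys) = descents xs + (if y < last xs then 1 else 0) + descents (y # ys)"
  by (induction xs rule: descents.induct) simp_all

lemma descents_le_length: "descents (a # u) \<le> length u"
proof -
  have "{i. Suc i < length (a # u) \<and> (a # u) ! Suc i < (a # u) ! i} \<subseteq> {..<length u}" by auto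
  then show ?thesis by (metis card_lessThan card_mono descents_eq_card finite_lessThan)
qed

lemma wval_eq_nth_signed_perm_word: "i \<le> n \<Longrightarrow> wval p i = (0 # signed_perm_word n p) ! i"
  by (cases i) (simp_all add: wval_def nth_signed_perm_word)

lemma desB_eq_descents: "desB n p = descents (0 # signed_perm_word n p)"
proof -
  have "{i \<in> {0..<n}. wval p i > wval p (Suc i)} = {i. Suc i < length (0 # signed_perm_word n p)
      \<and> (0 # signed_perm_word n p) ! Suc i < (0 # signed_perm_word n p) ! i}"
    by (auto simp: wval_eq_nth_signed_perm_word[where n = n])
  then show ?thesis by (simp add: desB_def descents_eq_card)
qed

text \<open>\<open>Bsign 1 n\<close> and \<open>Bsign (-1) n\<close> count words with positive, resp. negative, last letter.
  For \<open>n = 0\<close> this depends on the unspecified \<open>last []\<close>, so they agree with \<open>Bplus\<close> and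
  \<open>Bminus\<close> only for \<open>n \<ge> 1\<close>.\<close>
definition signed_weight :: "int \<Rightarrow> int list \<Rightarrow> int poly" where
  "signed_weight \<sigma> u = (if \<sigma> * last u > 0 then monom 1 (descents (0 # u)) else 0)"

definition Bsign :: "int \<Rightarrow> nat \<Rightarrow> int poly" where
  "Bsign \<sigma> n = (\<Sum>u\<in>signed_words n. signed_weight \<sigma> u)"

lemma Bpoly_eq_sum_signed_words: "Bpoly n = (\<Sum>u\<in>signed_words n. monom 1 (descents (0 # u)))"
  unfolding Bpoly_def desB_eq_descents by (rule sum_signed_perms_eq_sum_signed_words)

lemma Bsign_eq_sum_signed_perms:
  assumes "n \<ge> 1"
  shows "Bsign \<sigma> n = (\<Sum>p\<in>{p\<in>signed_perms n. \<sigma> * wval p n > 0}. monom 1 (desB n p))"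
proof -
  have last: "wval p n = last (signed_perm_word n p)" for p
  proof -
    have "signed_perm_word n p \<noteq> []" using assms by (auto simp flip: length_greater_0_conv)
    then show ?thesis using assms wval_eq_nth_signed_perm_word[of n n p]
      by (simp add: last_conv_nth nth_Cons')
  qed
  have "(\<Sum>p\<in>{p\<in>signed_perms n. \<sigma> * wval p n > 0}. monom 1 (desB n p))
      = (\<Sum>p\<in>signed_perms n. if \<sigma> * wval p n > 0 then monom 1 (desB n p) else 0)"
    by (simp add: sum.inter_filter finite_signed_perms)
  also have "\<dots> = Bsign \<sigma> n"
    unfolding last desB_eq_descents Bsign_def signed_weight_def
    by (rule sum_signed_perms_eq_sum_signed_words)
  finally show ?thesis by simp
qed

lemma Bplus_eq_Bsign: "n \<ge> 1 \<Longrightarrow> Bplus n = Bsign 1 n"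
  by (simp add: Bplus_def Bsign_eq_sum_signed_perms)

lemma Bminus_eq_Bsign: "n \<ge> 1 \<Longrightarrow> Bminus n = Bsign (-1) n"
  by (simp add: Bminus_def Bsign_eq_sum_signed_perms)

lemma Bpoly_eq_Bplus_add_Bminus: "Bpoly n = Bplus n + Bminus n"
proof (cases "n = 0")
  case True
  then show ?thesis by (simp add: Bpoly_eq_sum_signed_words Bplus_def Bminus_def)
next
  case False
  have "last u \<noteq> 0" if u: "u \<in> signed_words n" for u
  proof -
    have "u \<noteq> []" using u False by (auto simp: signed_words_def)
    then have "1 \<le> \<bar>last u\<bar>" using abs_le_if_in_signed_words[OF u, of "last u"] by simp
    then show ?thesis by auto
  qed
  then have "Bsign 1 n + Bsign (-1) n = Bpoly n"
    by (auto simp: Bsign_def signed_weight_def Bpoly_eq_sum_signed_words sum.distrib[symmetric]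
        intro!: sum.cong)
  then show ?thesis using False by (simp add: Bplus_eq_Bsign Bminus_eq_Bsign)
qed

section \<open>Inserting the largest letter\<close>

definition insert_signed :: "nat \<Rightarrow> nat \<Rightarrow> int \<Rightarrow> int list \<Rightarrow> int list" where
  "insert_signed n i s u = take i u @ s * int n # drop i u"

definition remove_signed :: "nat \<Rightarrow> int list \<Rightarrow> nat \<times> int \<times> int list" where
  "remove_signed n v = (let j = length (takeWhile (\<lambda>z. \<bar>z\<bar> \<noteq> int n) v)
     in (j, sgn (v ! j), take j v @ drop (Suc j) v))"

lemma insert_signed_in_signed_words:
  assumes u: "u \<in> signed_words m" and i: "i \<le> m" and s: "s \<in> {1, -1}"
  shows "insert_signed (Suc m) i s u \<in> signed_words (Suc m)"
proof -
  have len: "length u = m" and dist: "distinct (map abs u)" and set_u: "set (map abs u) = int ` {1..m}"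
    using u by (auto simp: signed_words_def)
  have map_abs: "map abs (insert_signed (Suc m) i s u)
      = map abs (take i u) @ int (Suc m) # map abs (drop i u)"
    using s by (auto simp: insert_signed_def)
  have "map abs u = map abs (take i u) @ map abs (drop i u)"
    by (metis append_take_drop_id map_append)
  then have dist': "distinct (map abs (take i u) @ map abs (drop i u))"
    and set': "set (map abs (take i u)) \<union> set (map abs (drop i u)) = int ` {1..m}"
    using dist set_u by (metis, metis set_append)
  have "int (Suc m) \<notin> set (map abs (take i u)) \<union> set (map abs (drop i u))"
    using set' by auto
  then have "distinct (map abs (insert_signed (Suc m) i s u))"
    unfolding map_abs using dist' by auto
  moreover have "set (map abs (insert_signed (Suc m) i s u)) = int ` {1..Suc m}"
    unfolding map_abs using set' by (auto simp: atLeastAtMostSuc_conv)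
  moreover have "length (insert_signed (Suc m) i s u) = Suc m"
    using len i by (simp add: insert_signed_def)
  ultimately show ?thesis by (simp add: signed_words_def)
qed

lemma remove_insert_signed:
  assumes u: "u \<in> signed_words m" and i: "i \<le> m" and s: "s \<in> {1, -1}"
  shows "remove_signed (Suc m) (insert_signed (Suc m) i s u) = (i, s, u)"
proof -
  have len: "length (take i u) = i" using u i by (simp add: signed_words_def)
  have "\<forall>x\<in>set (take i u). \<bar>x\<bar> \<noteq> int (Suc m)"
    using abs_le_if_in_signed_words[OF u] by (fastforce dest: in_set_takeD)
  then have "takeWhile (\<lambda>z. \<bar>z\<bar> \<noteq> int (Suc m)) (insert_signed (Suc m) i s u) = take i u"
    using s by (auto simp: insert_signed_def takeWhile_append2)
  moreover have "insert_signed (Suc m) i s u ! i = s * int (Suc m)"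
    unfolding insert_signed_def using len by (simp add: nth_append)
  moreover have "sgn (s * int (Suc m)) = s" using s by (auto simp: sgn_mult)
  moreover have "take i (insert_signed (Suc m) i s u) @ drop (Suc i) (insert_signed (Suc m) i s u) = u"
    unfolding insert_signed_def using len by simp
  ultimately show ?thesis using len by (simp add: remove_signed_def Let_def)
qed

lemma insert_signed_surj:
  assumes v: "v \<in> signed_words (Suc m)"
  shows "\<exists>i s u. i \<le> m \<and> s \<in> {1, -1} \<and> u \<in> signed_words m \<and> v = insert_signed (Suc m) i s u"
proof -
  have len: "length v = Suc m" and dist: "distinct (map abs v)"
    and set_v: "set (map abs v) = int ` {1..Suc m}"
    using v by (auto simp: signed_words_def)
  have "int (Suc m) \<in> set (map abs v)" unfolding set_v by (rule imageI) simp
  then obtain j where j: "j < length v" "\<bar>v ! j\<bar> = int (Suc m)"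
    by (auto simp: in_set_conv_nth)
  define s where "s = sgn (v ! j)"
  define u where "u = take j v @ drop (Suc j) v"
  have v_j: "v ! j = s * int (Suc m)" using j unfolding s_def by (metis sgn_mult_abs)
  have s: "s \<in> {1, -1}" using j unfolding s_def by (auto simp: sgn_if)
  have "take j u = take j v" "drop j u = drop (Suc j) v" using j by (simp_all add: u_def)
  then have v_eq: "v = insert_signed (Suc m) j s u"
    unfolding insert_signed_def v_j[symmetric] using j by (simp add: id_take_nth_drop[symmetric])
  have map_v: "map abs v = map abs (take j v) @ int (Suc m) # map abs (drop (Suc j) v)"
    using j by (metis id_take_nth_drop list.simps(9) map_append)
  have map_u: "map abs u = map abs (take j v) @ map abs (drop (Suc j) v)" by (simp add: u_def)
  have dist_u: "distinct (map abs u)" and notin: "int (Suc m) \<notin> set (map abs u)"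
    using dist unfolding map_v map_u by auto
  have "set (map abs v) = insert (int (Suc m)) (set (map abs u))" unfolding map_v map_u by auto
  then have "set (map abs u) = int ` {1..Suc m} - {int (Suc m)}"
    using notin set_v by (metis Diff_insert_absorb)
  also have "\<dots> = int ` {1..m}" by (auto simp: atLeastAtMostSuc_conv)
  finally have "set (map abs u) = int ` {1..m}" .
  moreover have "length u = m" using j len by (simp add: u_def)
  ultimately have "u \<in> signed_words m" using dist_u by (simp add: signed_words_def)
  moreover have "j \<le> m" using j len by simp
  ultimately show ?thesis using v_eq s by (intro exI[of _ j] exI[of _ s] exI[of _ u]) simp
qed

lemma bij_betw_insert_signed:
  "bij_betw (\<lambda>(i, s, u). insert_signed (Suc m) i s u)
     ({..m} \<times> {1, -1} \<times> signed_words m) (signed_words (Suc m))"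
proof (rule bij_betw_imageI)
  show "inj_on (\<lambda>(i, s, u). insert_signed (Suc m) i s u) ({..m} \<times> {1, -1} \<times> signed_words m)"
  proof (rule inj_on_inverseI[where g = "remove_signed (Suc m)"])
    fix x assume "x \<in> {..m} \<times> {1, -1::int} \<times> signed_words m"
    then obtain i s u where "x = (i, s, u)" "i \<le> m" "s \<in> {1, -1}" "u \<in> signed_words m"
      by auto
    then show "remove_signed (Suc m) ((\<lambda>(i, s, u). insert_signed (Suc m) i s u) x) = x"
      by (simp add: remove_insert_signed)
  qed
  show "(\<lambda>(i, s, u). insert_signed (Suc m) i s u) ` ({..m} \<times> {1, -1} \<times> signed_words m)
      = signed_words (Suc m)"
  proof
    show "signed_words (Suc m) \<subseteq> (\<lambda>(i, s, u). insert_signed (Suc m) i s u) ` ({..m} \<times> {1, -1} \<times> signed_words m)"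
    proof
      fix v assume "v \<in> signed_words (Suc m)"
      then obtain i s u where "i \<le> m" "s \<in> {1, -1}" "u \<in> signed_words m"
        "v = insert_signed (Suc m) i s u"
        using insert_signed_surj by blast
      then show "v \<in> (\<lambda>(i, s, u). insert_signed (Suc m) i s u) ` ({..m} \<times> {1, -1} \<times> signed_words m)"
        by force
    qed
  qed (auto intro: insert_signed_in_signed_words)
qed

lemma last_insert_signed:
  assumes "length u = m" and "i \<le> m"
  shows "last (insert_signed (Suc m) i s u) = (if i < m then last u else s * int (Suc m))"
  using assms by (auto simp: insert_signed_def last_drop)

lemma last_Cons_take:
  assumes "i \<le> length u" shows "last (a # take i u) = (a # u) ! i"
proof (cases i)
  case (Suc k)
  then have "k < length u" using assms by simp
  then show ?thesis using Suc by (simp add: take_Suc_conv_app_nth)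
qed simp

lemma descents_insert_extreme:
  assumes "xs \<noteq> []" and "(last xs < z \<and> y < z) \<or> (z < last xs \<and> z < y)"
  shows "descents (xs @ z # y # ys) = descents (xs @ y # ys) + (if y < last xs then 0 else 1)"
  using assms by (auto simp: descents_append)

lemma descents_insert_signed:
  assumes u: "u \<in> signed_words m" and i: "i \<le> m" and s: "s \<in> {1, -1}"
  shows "descents (0 # insert_signed (Suc m) i s u) = descents (0 # u) +
     (if i < m then (if u ! i < (0 # u) ! i then 0 else 1) else (if s = 1 then 0 else 1))"
proof -
  have len: "length u = m" using u by (simp add: signed_words_def)
  define xs where "xs = 0 # take i u"
  have last_xs: "last xs = (0 # u) ! i" unfolding xs_def by (rule last_Cons_take) (simp add: i len)
  have abs_last: "\<bar>last xs\<bar> \<le> int m"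
    using last_xs abs_le_if_in_signed_words[OF u] i len by (cases i) auto
  have ins: "0 # insert_signed (Suc m) i s u = xs @ s * int (Suc m) # drop i u"
    by (simp add: xs_def insert_signed_def)
  show ?thesis
  proof (cases "i < m")
    case True
    have drop: "drop i u = u ! i # drop (Suc i) u" using True len by (simp add: Cons_nth_drop_Suc)
    have "\<bar>u ! i\<bar> \<le> int m" using abs_le_if_in_signed_words[OF u] True len by simp
    then have "(last xs < s * int (Suc m) \<and> u ! i < s * int (Suc m))
        \<or> (s * int (Suc m) < last xs \<and> s * int (Suc m) < u ! i)"
      using abs_last s by auto
    moreover have "0 # u = xs @ u ! i # drop (Suc i) u" by (simp add: xs_def drop[symmetric])
    ultimately show ?thesis
      unfolding ins drop using descents_insert_extreme[of xs] True last_xs by (simp add: xs_def)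
  next
    case False
    then have "0 # u = xs" using i len by (simp add: xs_def)
    then show ?thesis
      unfolding ins using False i len s abs_last descents_append[of xs "s * int (Suc m)" "[]"]
      by (auto simp: xs_def)
  qed
qed

lemma sum_monom_ascents:
  fixes a :: "'a::linorder" and u :: "'a list"
  defines "d \<equiv> descents (a # u)"
  shows "(\<Sum>i<length u. monom (1::int) (d + (if u ! i < (a # u) ! i then 0 else 1)))
     = of_nat d * monom 1 d + of_nat (length u - d) * monom 1 (Suc d)"
proof -
  define P where "P i \<longleftrightarrow> u ! i < (a # u) ! i" for i
  have card_P: "card {i \<in> {..<length u}. P i} = d"
  proof -
    have "{i \<in> {..<length u}. P i} = {i. Suc i < length (a # u) \<and> (a # u) ! Suc i < (a # u) ! i}"
      by (auto simp: P_def)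
    then show ?thesis by (simp add: d_def descents_eq_card)
  qed
  have card_not_P: "card {i \<in> {..<length u}. \<not> P i} = length u - d"
  proof -
    have "{i \<in> {..<length u}. \<not> P i} = {..<length u} - {i \<in> {..<length u}. P i}" by auto
    then show ?thesis
      using card_P card_Diff_subset[of "{i \<in> {..<length u}. P i}" "{..<length u}"] by auto
  qed
  have "(\<Sum>i<length u. monom (1::int) (d + (if P i then 0 else 1)))
      = (\<Sum>i<length u. if P i then monom 1 d else monom 1 (Suc d))"
    by (rule sum.cong) auto
  also have "\<dots> = (\<Sum>i\<in>{i \<in> {..<length u}. P i}. monom 1 d)
      + (\<Sum>i\<in>{i \<in> {..<length u}. \<not> P i}. monom 1 (Suc d))"
    by (simp add: sum.If_cases Int_def conj_commute)
  also have "\<dots> = of_nat d * monom 1 d + of_nat (length u - d) * monom 1 (Suc d)"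
    using card_P card_not_P by simp
  finally show ?thesis by (simp add: P_def)
qed

definition Bstep :: "nat \<Rightarrow> int poly \<Rightarrow> int poly" where
  "Bstep n p = smult (2 * int n) [:0, 1:] * p + smult 2 ([:0, 1:] * [:1, -1:]) * pderiv p"

lemma Bstep_sum: "Bstep n (sum f A) = (\<Sum>x\<in>A. Bstep n (f x))"
proof -
  have "pderiv (sum f A) = (\<Sum>x\<in>A. pderiv (f x))" using higher_pderiv_sum[of 1 f A] by simp
  then show ?thesis by (simp only: Bstep_def sum_distrib_left sum.distrib)
qed

lemma Bstep_monom:
  assumes "d \<le> n"
  shows "Bstep n (monom 1 d) = 2 * (of_nat d * monom 1 d + of_nat (n - d) * monom 1 (Suc d))"
proof (rule poly_eq_poly_eq_iff[THEN iffD1], rule ext)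
  fix x :: int
  show "poly (Bstep n (monom 1 d)) x = poly (2 * (of_nat d * monom 1 d + of_nat (n - d) * monom 1 (Suc d))) x"
    using assms by (cases d) (simp_all add: Bstep_def poly_monom of_nat_poly pderiv_monom
        of_nat_diff algebra_simps)
qed

lemma sum_signed_weight_insert_signed:
  assumes u: "u \<in> signed_words m" and \<sigma>: "\<sigma> \<in> {1, -1}"
  shows "(\<Sum>i\<le>m. \<Sum>s\<in>{1, -1}. signed_weight \<sigma> (insert_signed (Suc m) i s u))
     = Bstep m (signed_weight \<sigma> u) + (if \<sigma> = 1 then 1 else [:0, 1:]) * monom 1 (descents (0 # u))"
proof -
  define d where "d = descents (0 # u)"
  have len: "length u = m" using u by (simp add: signed_words_def)
  have inner: "signed_weight \<sigma> (insert_signed (Suc m) i s u)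
      = (if \<sigma> * last u > 0 then monom 1 (d + (if u ! i < (0 # u) ! i then 0 else 1)) else 0)"
    if "i < m" "s \<in> {1, -1}" for i s
    using that len descents_insert_signed[OF u, of i s]
    by (simp add: signed_weight_def last_insert_signed d_def)
  have end_pos: "signed_weight \<sigma> (insert_signed (Suc m) m s u)
      = (if s = \<sigma> then monom 1 (d + (if s = 1 then 0 else 1)) else 0)"
    if "s \<in> {1, -1}" for s
    using that \<sigma> len descents_insert_signed[OF u, of m s]
    by (auto simp: signed_weight_def last_insert_signed d_def zero_less_mult_iff)
  have "(\<Sum>i<m. \<Sum>s\<in>{1, -1}. signed_weight \<sigma> (insert_signed (Suc m) i s u))
      = (if \<sigma> * last u > 0 then 2 * (\<Sum>i<m. monom 1 (d + (if u ! i < (0 # u) ! i then 0 else 1)))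
         else 0)"
    by (simp add: inner sum_distrib_left)
  also have "\<dots> = Bstep m (signed_weight \<sigma> u)"
    using sum_monom_ascents[of 0 u] Bstep_monom[of d m] descents_le_length[of 0 u] len
    by (simp add: signed_weight_def d_def Bstep_def)
  finally show ?thesis
    using \<sigma> by (auto simp: lessThan_Suc_atMost[symmetric] end_pos d_def monom_Suc)
qed

lemma Bsign_Suc:
  assumes "\<sigma> \<in> {1, -1}"
  shows "Bsign \<sigma> (Suc m) = Bstep m (Bsign \<sigma> m) + (if \<sigma> = 1 then 1 else [:0, 1:]) * Bpoly m"
proof -
  have "Bsign \<sigma> (Suc m) = (\<Sum>(i, s, u)\<in>{..m} \<times> {1, -1} \<times> signed_words m.
      signed_weight \<sigma> (insert_signed (Suc m) i s u))"
    unfolding Bsign_def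
    by (rule sum.reindex_bij_betw[OF bij_betw_insert_signed, symmetric, simplified prod.case_distrib])
  also have "\<dots> = (\<Sum>u\<in>signed_words m. \<Sum>i\<le>m. \<Sum>s\<in>{1, -1}.
      signed_weight \<sigma> (insert_signed (Suc m) i s u))"
    by (simp add: sum.cartesian_product[symmetric] sum.swap[of _ "signed_words m"])
  also have "\<dots> = (\<Sum>u\<in>signed_words m. Bstep m (signed_weight \<sigma> u)
      + (if \<sigma> = 1 then 1 else [:0, 1:]) * monom 1 (descents (0 # u)))"
    by (rule sum.cong[OF refl]) (rule sum_signed_weight_insert_signed[OF _ assms])
  also have "\<dots> = Bstep m (Bsign \<sigma> m) + (if \<sigma> = 1 then 1 else [:0, 1:]) * Bpoly m"
    by (simp only: sum.distrib Bstep_sum Bsign_def Bpoly_eq_sum_signed_words sum_distrib_left)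
  finally show ?thesis .
qed

lemma Bstep_0_degree_0: "degree p = 0 \<Longrightarrow> Bstep 0 p = 0"
  using pderiv_eq_0_iff[of p] by (simp add: Bstep_def)

lemma Bplus_Suc: "Bplus (Suc m) = Bstep m (Bplus m) + Bpoly m"
proof (cases m)
  case 0
  have "Bstep 0 (Bsign 1 0) = 0" "Bstep 0 (Bplus 0) = 0"
    by (simp_all add: Bstep_0_degree_0 Bsign_def signed_weight_def Bplus_def)
  then show ?thesis using 0 Bsign_Suc[of 1 0] Bplus_eq_Bsign[of 1] by simp
qed (use Bsign_Suc[of 1 m] Bplus_eq_Bsign in simp)

lemma Bminus_Suc: "Bminus (Suc m) = Bstep m (Bminus m) + [:0, 1:] * Bpoly m"
proof (cases m)
  case 0
  have "Bstep 0 (Bsign (-1) 0) = 0" "Bstep 0 (Bminus 0) = 0"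
    by (simp_all add: Bstep_0_degree_0 Bsign_def signed_weight_def Bminus_def)
  then show ?thesis using 0 Bsign_Suc[of "-1" 0] Bminus_eq_Bsign[of 1] by simp
qed (use Bsign_Suc[of "-1" m] Bminus_eq_Bsign in simp)

section \<open>Closed forms as power series\<close>

definition plus_series :: "nat \<Rightarrow> int fps" where
  "plus_series n = Abs_fps (\<lambda>j. (2 * int j + 1) ^ n - (if j = 0 then 0 else (2 * int j) ^ n))"

definition minus_series :: "nat \<Rightarrow> int fps" where
  "minus_series n = Abs_fps (\<lambda>j. if j = 0 then 0 else (2 * int j) ^ n - (2 * int j - 1) ^ n)"

definition odd_power_series :: "nat \<Rightarrow> int fps" where
  "odd_power_series n = Abs_fps (\<lambda>j. (2 * int j + 1) ^ n)"

lemma plus_series_add_minus_series: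
  "plus_series n + minus_series n = (1 - fps_X) * odd_power_series n"
proof (rule fps_ext)
  fix j show "(plus_series n + minus_series n) $ j = ((1 - fps_X) * odd_power_series n) $ j"
  proof (cases j)
    case (Suc i)
    have "2 * int (Suc i) - 1 = 2 * int i + 1" by simp
    then show ?thesis using Suc
      by (simp add: plus_series_def minus_series_def odd_power_series_def algebra_simps)
  qed (simp add: plus_series_def minus_series_def odd_power_series_def)
qed

lemma fps_X_mult_fps_deriv: "fps_X * fps_deriv f = Abs_fps (\<lambda>j. of_nat j * f $ j)"
  by (rule fps_ext) (auto simp: gr0_conv_Suc)

lemma plus_series_Suc:
  "plus_series (Suc n) = 2 * (fps_X * fps_deriv (plus_series n)) + odd_power_series n"
  unfolding fps_X_mult_fps_deriv
  by (rule fps_ext) (simp add: plus_series_def odd_power_series_def algebra_simps numeral_fps_const)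

lemma minus_series_Suc:
  "minus_series (Suc n) = 2 * (fps_X * fps_deriv (minus_series n)) + fps_X * odd_power_series n"
  unfolding fps_X_mult_fps_deriv
proof (rule fps_ext)
  fix j
  show "minus_series (Suc n) $ j
      = (2 * Abs_fps (\<lambda>j. of_nat j * minus_series n $ j) + fps_X * odd_power_series n) $ j"
  proof (cases j)
    case (Suc i)
    have "2 * int (Suc i) - 1 = 2 * int i + 1" by simp
    then show ?thesis using Suc
      by (simp add: minus_series_def odd_power_series_def algebra_simps numeral_fps_const)
  qed (simp add: minus_series_def odd_power_series_def numeral_fps_const)
qed

lemma fps_deriv_one_minus_X_power:
  "fps_deriv ((1 - fps_X :: 'a::comm_ring_1 fps) ^ n) * (1 - fps_X) = - of_nat n * (1 - fps_X) ^ n"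
proof (cases n)
  case (Suc m)
  have "fps_deriv ((1 - fps_X :: 'a fps) ^ Suc m) = - of_nat (Suc m) * (1 - fps_X) ^ m"
    using fps_deriv_power'[of "1 - fps_X :: 'a fps" "Suc m"] by simp
  then show ?thesis using Suc by (simp add: power_Suc2 mult.assoc)
qed simp

lemma fps_of_poly_one_minus_X: "fps_of_poly [:1, -1:] = (1 - fps_X :: 'a::comm_ring_1 fps)"
  by (simp add: fps_of_poly_pCons fps_const_neg)

lemma fps_of_poly_Bstep:
  assumes "fps_of_poly p = (1 - fps_X) ^ n * f"
  shows "fps_of_poly (Bstep n p) = 2 * ((1 - fps_X) ^ Suc n * (fps_X * fps_deriv f))"
proof -
  define Y where "Y = (1 - fps_X :: int fps)"
  have deriv_Y: "fps_deriv (Y ^ n) * Y = - of_nat n * Y ^ n"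
    unfolding Y_def by (rule fps_deriv_one_minus_X_power)
  have "fps_of_poly (Bstep n p)
      = fps_const (2 * int n) * fps_X * (Y ^ n * f) + fps_const 2 * (fps_X * Y) * fps_deriv (Y ^ n * f)"
    unfolding Bstep_def
    by (simp only: fps_of_poly_add fps_of_poly_mult fps_of_poly_smult fps_of_poly_pderiv
        fps_of_poly_one_minus_X fps_of_poly_fps_X assms Y_def)
  also have "fps_const 2 * (fps_X * Y) * fps_deriv (Y ^ n * f)
      = 2 * fps_X * (fps_deriv (Y ^ n) * Y) * f + 2 * (Y ^ Suc n * (fps_X * fps_deriv f))"
    by (simp add: numeral_fps_const[symmetric] algebra_simps)
  also have "\<dots> = - (2 * of_nat n * fps_X * Y ^ n * f) + 2 * (Y ^ Suc n * (fps_X * fps_deriv f))"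
    unfolding deriv_Y by (simp add: algebra_simps)
  finally show ?thesis
    by (simp add: fps_const_mult fps_of_nat[symmetric] numeral_fps_const algebra_simps Y_def)
qed

lemma fps_of_Bplus_Bminus:
  "fps_of_poly (Bplus n) = (1 - fps_X) ^ n * plus_series n
   \<and> fps_of_poly (Bminus n) = (1 - fps_X) ^ n * minus_series n"
proof (induction n)
  case 0
  have "plus_series 0 = 1" by (rule fps_ext) (simp add: plus_series_def)
  moreover have "minus_series 0 = 0" by (rule fps_ext) (simp add: minus_series_def)
  ultimately show ?case by (simp add: Bplus_def Bminus_def)
next
  case (Suc n)
  then have plus: "fps_of_poly (Bplus n) = (1 - fps_X) ^ n * plus_series n"
    and minus: "fps_of_poly (Bminus n) = (1 - fps_X) ^ n * minus_series n"
    by simp_all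
  have "fps_of_poly (Bpoly n) = (1 - fps_X) ^ n * (plus_series n + minus_series n)"
    using plus minus by (simp add: Bpoly_eq_Bplus_add_Bminus fps_of_poly_add distrib_left)
  then have Bpoly: "fps_of_poly (Bpoly n) = (1 - fps_X) ^ Suc n * odd_power_series n"
    by (simp add: plus_series_add_minus_series)
  have "fps_of_poly (Bplus (Suc n)) = (1 - fps_X) ^ Suc n * plus_series (Suc n)"
    unfolding Bplus_Suc fps_of_poly_add Bpoly fps_of_poly_Bstep[OF plus] plus_series_Suc
    by (simp add: algebra_simps)
  moreover have "fps_of_poly (Bminus (Suc n)) = (1 - fps_X) ^ Suc n * minus_series (Suc n)"
    unfolding Bminus_Suc fps_of_poly_add fps_of_poly_mult fps_of_poly_fps_X Bpoly
      fps_of_poly_Bstep[OF minus] minus_series_Suc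
    by (simp add: algebra_simps)
  ultimately show ?case ..
qed

section \<open>Exponential generating functions\<close>

text \<open>\<open>exp_convolution P n / n!\<close> is the \<open>n\<close>-th coefficient of \<open>egf P \<cdot> exp((2 - 2x) t)\<close>.\<close>
definition exp_convolution :: "(nat \<Rightarrow> int poly) \<Rightarrow> nat \<Rightarrow> int poly" where
  "exp_convolution P n = (\<Sum>k\<le>n. smult (of_nat (n choose k)) ([:2, -2:] ^ (n - k)) * P k)"

lemma plus_series_convolution:
  "plus_series n - fps_X * (\<Sum>k\<le>n. fps_const (of_nat (n choose k) * 2 ^ (n - k)) * plus_series k)
   = 1 - fps_const (2 ^ n) * fps_X"
proof -
  have sum_eq: "(\<Sum>k\<le>n. fps_const (of_nat (n choose k) * 2 ^ (n - k)) * plus_series k)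
      = Abs_fps (\<lambda>j. (2 * int j + 3) ^ n - (if j = 0 then 0 else (2 * int j + 2) ^ n))"
  proof (rule fps_ext)
    fix j
    show "(\<Sum>k\<le>n. fps_const (of_nat (n choose k) * 2 ^ (n - k)) * plus_series k) $ j
        = Abs_fps (\<lambda>j. (2 * int j + 3) ^ n - (if j = 0 then 0 else (2 * int j + 2) ^ n)) $ j"
      using binomial_ring[of "2 * int j + 1" 2 n] binomial_ring[of "2 * int j" 2 n]
      by (simp add: fps_sum_nth plus_series_def sum_subtractf algebra_simps)
  qed
  show ?thesis unfolding sum_eq
  proof (rule fps_ext)
    fix j
    show "(plus_series n - fps_X * Abs_fps (\<lambda>j. (2 * int j + 3) ^ n
        - (if j = 0 then 0 else (2 * int j + 2) ^ n))) $ j = (1 - fps_const (2 ^ n) * fps_X) $ j"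
    proof (cases j)
      case (Suc i)
      have "2 * int i + 3 = 2 * int (Suc i) + 1" "2 * int i + 2 = 2 * int (Suc i)" by simp_all
      then show ?thesis using Suc by (cases i) (auto simp: plus_series_def)
    qed (simp add: plus_series_def)
  qed
qed

lemma minus_series_convolution:
  "minus_series n - fps_X * (\<Sum>k\<le>n. fps_const (of_nat (n choose k) * 2 ^ (n - k)) * minus_series k)
   = fps_const (2 ^ n - 1) * fps_X"
proof -
  have sum_eq: "(\<Sum>k\<le>n. fps_const (of_nat (n choose k) * 2 ^ (n - k)) * minus_series k)
      = Abs_fps (\<lambda>j. if j = 0 then 0 else (2 * int j + 2) ^ n - (2 * int j + 1) ^ n)"
  proof (rule fps_ext)
    fix j
    show "(\<Sum>k\<le>n. fps_const (of_nat (n choose k) * 2 ^ (n - k)) * minus_series k) $ j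
        = Abs_fps (\<lambda>j. if j = 0 then 0 else (2 * int j + 2) ^ n - (2 * int j + 1) ^ n) $ j"
      using binomial_ring[of "2 * int j" 2 n] binomial_ring[of "2 * int j - 1" 2 n]
      by (simp add: fps_sum_nth minus_series_def sum_subtractf algebra_simps)
  qed
  show ?thesis unfolding sum_eq
  proof (rule fps_ext)
    fix j
    show "(minus_series n - fps_X * Abs_fps (\<lambda>j. if j = 0 then 0
        else (2 * int j + 2) ^ n - (2 * int j + 1) ^ n)) $ j = (fps_const (2 ^ n - 1) * fps_X) $ j"
    proof (cases j)
      case (Suc i)
      have "2 * int i + 2 = 2 * int (Suc i)" "2 * int i + 1 = 2 * int (Suc i) - 1" by simp_all
      then show ?thesis using Suc by (cases i) (auto simp: minus_series_def)
    qed (simp add: minus_series_def)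
  qed
qed

lemma fps_of_poly_two_minus_two_X: "fps_of_poly [:2, -2:] = (fps_const 2 * (1 - fps_X) :: int fps)"
  by (simp add: fps_of_poly_pCons fps_const_neg algebra_simps numeral_fps_const)

lemma fps_of_poly_sub_exp_convolution:
  assumes "\<And>k. fps_of_poly (P k) = (1 - fps_X) ^ k * f k"
  shows "fps_of_poly (P n - [:0, 1:] * exp_convolution P n) = (1 - fps_X) ^ n *
     (f n - fps_X * (\<Sum>k\<le>n. fps_const (of_nat (n choose k) * 2 ^ (n - k)) * f k))"
proof -
  have "fps_of_poly (smult (of_nat (n choose k)) ([:2, -2:] ^ (n - k)) * P k)
      = (1 - fps_X) ^ n * (fps_const (of_nat (n choose k) * 2 ^ (n - k)) * f k)"
    if "k \<le> n" for k
  proof -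
    have Y_power: "(1 - fps_X :: int fps) ^ (n - k) * (1 - fps_X) ^ k = (1 - fps_X) ^ n"
      using that by (simp add: power_add[symmetric])
    have "fps_of_poly (smult (of_nat (n choose k)) ([:2, -2:] ^ (n - k)) * P k)
        = fps_const (of_nat (n choose k) * 2 ^ (n - k))
          * ((1 - fps_X) ^ (n - k) * (1 - fps_X) ^ k) * f k"
      by (simp only: fps_of_poly_mult fps_of_poly_smult fps_of_poly_power
          fps_of_poly_two_minus_two_X assms power_mult_distrib fps_const_power
          fps_const_mult[symmetric] mult_ac)
    then show ?thesis unfolding Y_power by (simp only: mult_ac)
  qed
  then have "fps_of_poly (exp_convolution P n)
      = (1 - fps_X) ^ n * (\<Sum>k\<le>n. fps_const (of_nat (n choose k) * 2 ^ (n - k)) * f k)"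
    unfolding exp_convolution_def fps_of_poly_sum sum_distrib_left by (intro sum.cong) simp_all
  then show ?thesis
    by (simp only: fps_of_poly_diff fps_of_poly_mult fps_of_poly_fps_X assms) (simp add: algebra_simps)
qed

lemma Bplus_sub_exp_convolution:
  "Bplus n - [:0, 1:] * exp_convolution Bplus n = [:1, -1:] ^ n - [:0, 1:] * [:2, -2:] ^ n"
proof -
  have "fps_of_poly (Bplus n - [:0, 1:] * exp_convolution Bplus n)
      = (1 - fps_X) ^ n * (1 - fps_const (2 ^ n) * fps_X)"
    using fps_of_Bplus_Bminus
    by (simp only: fps_of_poly_sub_exp_convolution plus_series_convolution)
  also have "\<dots> = fps_of_poly ([:1, -1:] ^ n - [:0, 1:] * [:2, -2:] ^ n)"
    by (simp only: fps_of_poly_diff fps_of_poly_mult fps_of_poly_power fps_of_poly_two_minus_two_X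
        fps_of_poly_one_minus_X fps_of_poly_fps_X power_mult_distrib fps_const_power)
      (simp add: algebra_simps)
  finally show ?thesis by (simp only: fps_of_poly_eq_iff)
qed

lemma Bminus_sub_exp_convolution:
  "Bminus n - [:0, 1:] * exp_convolution Bminus n = [:0, 1:] * ([:2, -2:] ^ n - [:1, -1:] ^ n)"
proof -
  have "fps_of_poly (Bminus n - [:0, 1:] * exp_convolution Bminus n)
      = (1 - fps_X) ^ n * (fps_const (2 ^ n - 1) * fps_X)"
    using fps_of_Bplus_Bminus
    by (simp only: fps_of_poly_sub_exp_convolution minus_series_convolution)
  also have "\<dots> = fps_of_poly ([:0, 1:] * ([:2, -2:] ^ n - [:1, -1:] ^ n))"
    by (simp only: fps_of_poly_diff fps_of_poly_mult fps_of_poly_power fps_of_poly_two_minus_two_X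
        fps_of_poly_one_minus_X fps_of_poly_fps_X power_mult_distrib fps_const_power)
      (simp add: algebra_simps fps_const_sub[symmetric])
  finally show ?thesis by (simp only: fps_of_poly_eq_iff)
qed

text \<open>Needed for \<open>fps_exp\<close>, which lives in \<open>field_char_0\<close>.\<close>
instance fract :: ("{idom,ring_char_0}") ring_char_0
proof
  show "inj (of_nat :: nat \<Rightarrow> 'a fract)"
  proof (rule injI)
    fix m n assume "(of_nat m :: 'a fract) = of_nat n"
    then have "Fract (of_nat m :: 'a) 1 = Fract (of_nat n) 1" by (simp add: of_nat_fract)
    then show "m = n" by (simp add: eq_fract)
  qed
qed

lemma to_fract_power: "to_fract (x ^ n) = to_fract x ^ n"
  by (induction n) simp_all

lemma to_fract_of_nat: "to_fract (of_nat n) = of_nat n"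
  by (induction n) simp_all

lemma to_fract_one_minus_X: "to_fract [:1, -1:] = 1 - xF"
proof -
  have "[:1, -1:] = (1 - [:0, 1:] :: int poly)" by (simp add: one_pCons)
  then show ?thesis by (simp add: xF_def)
qed

lemma to_fract_two_minus_two_X: "to_fract [:2, -2:] = 2 * (1 - xF)"
proof -
  have "[:2, -2:] = (1 - [:0, 1:]) + (1 - [:0, 1:] :: int poly)" by (simp add: one_pCons)
  then have "to_fract [:2, -2:] = (1 - xF) + (1 - xF)"
    by (simp only: to_fract_add to_fract_diff to_fract_1 xF_def)
  then show ?thesis by simp
qed

lemma xF_neq_1: "xF \<noteq> 1"
proof
  assume "xF = 1"
  then have "[:0, 1:] = (1 :: int poly)" by (simp add: xF_def flip: to_fract_1)
  then show False by (simp add: one_pCons)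
qed

lemma egf_diff: "egf (\<lambda>n. P n - Q n) = egf P - egf Q"
  by (rule fps_ext) (simp add: egf_def diff_divide_distrib)

lemma egf_mult_left: "egf (\<lambda>n. c * P n) = fps_const (to_fract c) * egf P"
  by (rule fps_ext) (simp add: egf_def)

lemma egf_power: "egf (\<lambda>n. p ^ n) = fps_exp (to_fract p)"
  by (rule fps_ext) (simp add: egf_def to_fract_power)

lemma egf_mult_one_minus_exp:
  "egf P * (1 - fps_const xF * fps_exp (2 * (1 - xF)))
   = egf (\<lambda>n. P n - [:0, 1:] * exp_convolution P n)"
proof (rule fps_ext)
  fix n
  define c where "c = 2 * (1 - xF)"
  have conv: "(\<Sum>i=0..n. egf P $ i * fps_exp c $ (n - i))
      = to_fract (exp_convolution P n) / fact n"
    unfolding exp_convolution_def to_fract_sum sum_divide_distrib atMost_atLeast0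
  proof (rule sum.cong[OF refl])
    fix k assume k: "k \<in> {0..n}"
    have "of_nat (n choose k) / (fact n :: int poly fract) = 1 / (fact k * fact (n - k))"
      using k by (simp add: binomial_fact)
    moreover have "to_fract (smult (of_nat (n choose k)) ([:2, -2:] ^ (n - k)) * P k)
        = of_nat (n choose k) * c ^ (n - k) * to_fract (P k)"
    proof -
      have "smult (of_nat (n choose k)) q = of_nat (n choose k) * q" for q :: "int poly"
        by (simp add: of_nat_poly)
      then show ?thesis
        by (simp only: to_fract_mult to_fract_of_nat to_fract_power to_fract_two_minus_two_X c_def)
    qed
    ultimately show "egf P $ k * fps_exp c $ (n - k)
        = to_fract (smult (of_nat (n choose k)) ([:2, -2:] ^ (n - k)) * P k) / fact n"
      using k by (simp add: egf_def field_simps)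
  qed
  have distrib: "egf P * (1 - fps_const xF * fps_exp c) = egf P - fps_const xF * (egf P * fps_exp c)"
    by (simp add: algebra_simps)
  have "(egf P * (1 - fps_const xF * fps_exp c)) $ n
      = egf P $ n - xF * (\<Sum>i=0..n. egf P $ i * fps_exp c $ (n - i))"
    unfolding distrib by (simp only: fps_sub_nth fps_mult_left_const_nth) (simp only: fps_mult_nth)
  also have "\<dots> = egf (\<lambda>n. P n - [:0, 1:] * exp_convolution P n) $ n"
    unfolding conv
    by (unfold egf_def fps_nth_Abs_fps to_fract_diff to_fract_mult xF_def[symmetric])
      (simp add: diff_divide_distrib)
  finally show "(egf P * (1 - fps_const xF * fps_exp c)) $ n
      = egf (\<lambda>n. P n - [:0, 1:] * exp_convolution P n) $ n" .
qed

lemma egf_eq_divide: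
  assumes "egf P * (1 - fps_const xF * fps_exp (2 * (1 - xF))) = M"
  shows "egf P = fps_exp (2 * xF) * M / (fps_exp (2 * xF) - fps_const xF * fps_exp 2)"
proof -
  define D where "D = fps_exp (2 * xF) - fps_const xF * fps_exp 2"
  have "fps_exp (2 * xF) * fps_exp (2 * (1 - xF)) = fps_exp 2"
    by (simp add: fps_exp_add_mult[symmetric] algebra_simps)
  then have "D = fps_exp (2 * xF) * (1 - fps_const xF * fps_exp (2 * (1 - xF)))"
    unfolding D_def by (simp add: right_diff_distrib mult.left_commute)
  then have "fps_exp (2 * xF) * M = egf P * D" using assms by (simp add: mult_ac)
  moreover have "D $ 0 \<noteq> 0" using xF_neq_1 by (simp add: D_def)
  moreover have "D * inverse D = 1" using \<open>D $ 0 \<noteq> 0\<close> by (metis inverse_mult_eq_1 mult.commute)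
  ultimately show ?thesis
    unfolding D_def[symmetric] by (simp add: fps_divide_unit mult.assoc)
qed

lemma egf_Bplus:
  "egf Bplus = fps_exp 1 * (fps_exp xF - fps_const xF * fps_exp 1)
     / (fps_exp (2 * xF) - fps_const xF * fps_exp 2)"
proof -
  have "egf Bplus * (1 - fps_const xF * fps_exp (2 * (1 - xF)))
      = fps_exp (1 - xF) - fps_const xF * fps_exp (2 * (1 - xF))"
    unfolding egf_mult_one_minus_exp Bplus_sub_exp_convolution
    by (simp only: egf_diff egf_mult_left egf_power to_fract_one_minus_X to_fract_two_minus_two_X
        xF_def[symmetric] right_diff_distrib)
  moreover have "fps_exp (2 * xF) * (fps_exp (1 - xF) - fps_const xF * fps_exp (2 * (1 - xF)))
      = fps_exp 1 * (fps_exp xF - fps_const xF * fps_exp 1)"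
    by (simp add: right_diff_distrib mult.left_commute fps_exp_add_mult[symmetric] algebra_simps)
  ultimately show ?thesis by (metis egf_eq_divide)
qed

lemma egf_Bminus:
  "egf Bminus = fps_const xF * fps_exp 1 * (fps_exp 1 - fps_exp xF)
     / (fps_exp (2 * xF) - fps_const xF * fps_exp 2)"
proof -
  have "egf Bminus * (1 - fps_const xF * fps_exp (2 * (1 - xF)))
      = fps_const xF * (fps_exp (2 * (1 - xF)) - fps_exp (1 - xF))"
    unfolding egf_mult_one_minus_exp Bminus_sub_exp_convolution
    by (simp only: egf_diff egf_mult_left egf_power to_fract_one_minus_X to_fract_two_minus_two_X
        xF_def[symmetric] right_diff_distrib)
  moreover have "fps_exp (2 * xF) * (fps_const xF * (fps_exp (2 * (1 - xF)) - fps_exp (1 - xF)))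
      = fps_const xF * fps_exp 1 * (fps_exp 1 - fps_exp xF)"
    by (simp add: right_diff_distrib mult.left_commute fps_exp_add_mult[symmetric] algebra_simps)
  ultimately show ?thesis by (metis egf_eq_divide)
qed

theorem proposition7p7:
  shows "(\<forall>n\<ge>1. Bplus n = smult (2 * (int n - 1)) [:0, 1:] * Bplus (n - 1)
                       + smult 2 ([:0, 1:] * [:1, -1:]) * pderiv (Bplus (n - 1))
                       + Bpoly (n - 1))
   \<and> egf Bplus = fps_exp 1 * (fps_exp xF - fps_const xF * fps_exp 1)
                   / (fps_exp (2 * xF) - fps_const xF * fps_exp 2)
   \<and> egf Bminus = fps_const xF * fps_exp 1 * (fps_exp 1 - fps_exp xF)
                   / (fps_exp (2 * xF) - fps_const xF * fps_exp 2)"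
proof (intro conjI allI impI egf_Bplus egf_Bminus)
  fix n :: nat assume "n \<ge> 1"
  then obtain m where "n = Suc m" by (cases n) auto
  then show "Bplus n = smult (2 * (int n - 1)) [:0, 1:] * Bplus (n - 1)
      + smult 2 ([:0, 1:] * [:1, -1:]) * pderiv (Bplus (n - 1)) + Bpoly (n - 1)"
    using Bplus_Suc[of m] by (simp add: Bstep_def)
qed

end
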